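(* Let $R$ be a noetherian ring and $M$ a finitely generated $R$-module. (i) $\mathrm{Fitt}^0_R(M)\subseteq\mathrm{char}_R(M)$. (ii) If the projective dimension of $M$ is at most $1$, then $\mathrm{Fitt}^0_R(M)=\mathrm{char}_R(M)$.
   Context: $M^*=\mathrm{Hom}_R(M,R)$, $\bigcap^n_RM=(\bigwedge^n_R(M^* ))^*$. For a finitely generated $R$-module $M$, choose $n>0$ and an exact sequence $0\to N\to R^n\to M\to0$ and set $\mathrm{char}_R(M)=\mathrm{im}(\bigcap^n_RN\to\bigcap^n_RR^n=R)$ (independent of the choice). $\mathrm{Fitt}^0_R$ is the zeroth Fitting ideal. *)

theory Defs
  imports "HOL-Analysis.Analysis"
begin

text \<open>Commutative rings are modelled by the type class comm_ring_1; ideals of R are the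
  subspaces of R regarded as a module over itself via multiplication.\<close>

definition noetherian_ring :: "'a::comm_ring_1 itself \<Rightarrow> bool" where
  "noetherian_ring _ \<longleftrightarrow>
     (\<forall>I::'a set. module.subspace (*) I \<longrightarrow> (\<exists>S. finite S \<and> I = module.span (*) S))"

text \<open>R^n is modelled as 'a^'n (n = CARD('n)).  A submodule N of R^n (the relations of a
  presentation 0 -> N -> R^n -> M -> 0).\<close>

text \<open>Zeroth Fitting ideal of R^n/N: the ideal generated by all n x n minors of the relation
  matrix, i.e. by the determinants of all n-tuples of elements of N.\<close>
definition fitt0 :: "('a::comm_ring_1 ^ 'n) set \<Rightarrow> 'a set" where
  "fitt0 N = module.span (*) {det (\<chi> i. v i) | v :: 'n \<Rightarrow> 'a ^ 'n. \<forall>i. v i \<in> N}"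

text \<open>The dual N^* = Hom_R(N,R), elements represented as functions on R^n vanishing off N.\<close>
definition dual_sub :: "('a::comm_ring_1 ^ 'n) set \<Rightarrow> ('a ^ 'n \<Rightarrow> 'a) set" where
  "dual_sub N = {f. (\<forall>x\<in>N. \<forall>y\<in>N. f (x + y) = f x + f y)
                  \<and> (\<forall>c. \<forall>x\<in>N. f (c *s x) = c * f x)
                  \<and> (\<forall>x. x \<notin> N \<longrightarrow> f x = 0)}"

text \<open>Elements of the n-th Bass-Rosenberg power of N, (wedge^n (N^*))^*, are identified with
  alternating n-linear forms on N^*, the n arguments indexed by 'n.\<close>
definition alt_multilinear ::
    "('a::comm_ring_1 ^ 'n) set \<Rightarrow> (('n \<Rightarrow> ('a ^ 'n \<Rightarrow> 'a)) \<Rightarrow> 'a) \<Rightarrow> bool" where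
  "alt_multilinear N \<Phi> \<longleftrightarrow>
     (\<forall>g. (\<forall>i. g i \<in> dual_sub N) \<longrightarrow>
        (\<forall>i. (\<forall>h1\<in>dual_sub N. \<forall>h2\<in>dual_sub N.
                 \<Phi> (g(i := (\<lambda>x. h1 x + h2 x))) = \<Phi> (g(i := h1)) + \<Phi> (g(i := h2)))
           \<and> (\<forall>c. \<forall>h\<in>dual_sub N. \<Phi> (g(i := (\<lambda>x. c * h x))) = c * \<Phi> (g(i := h))))
      \<and> ((\<exists>i j. i \<noteq> j \<and> g i = g j) \<longrightarrow> \<Phi> g = 0))"

text \<open>char_R(R^n/N): image of bigcap^n N -> bigcap^n R^n = R.  The latter identification is
  evaluation at e_1^* wedge ... wedge e_n^*; the map restricts the coordinate functionals to N.\<close>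
definition char_ideal :: "('a::comm_ring_1 ^ 'n) set \<Rightarrow> 'a set" where
  "char_ideal N = {\<Phi> (\<lambda>i x. if x \<in> N then x $ i else 0) | \<Phi>. alt_multilinear N \<Phi>}"

text \<open>N is a projective module (finitely generated case): a direct summand of some R^m,
  R^m modelled as functions nat => 'a vanishing from m on.\<close>
definition fg_projective :: "('a::comm_ring_1 ^ 'n) set \<Rightarrow> bool" where
  "fg_projective N \<longleftrightarrow>
     (\<exists>(m::nat) (i :: 'a ^ 'n \<Rightarrow> (nat \<Rightarrow> 'a)) (p :: (nat \<Rightarrow> 'a) \<Rightarrow> 'a ^ 'n).
        (\<forall>x\<in>N. \<forall>y\<in>N. i (x + y) = (\<lambda>k. i x k + i y k)) \<and> (\<forall>c. \<forall>x\<in>N. i (c *s x) = (\<lambda>k. c * i x k))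
      \<and> (\<forall>x\<in>N. \<forall>k\<ge>m. i x k = 0)
      \<and> (\<forall>u v. p (\<lambda>k. u k + v k) = p u + p v) \<and> (\<forall>c u. p (\<lambda>k. c * u k) = c *s p u)
      \<and> (\<forall>u. (\<forall>k\<ge>m. u k = 0) \<longrightarrow> p u \<in> N)
      \<and> (\<forall>x\<in>N. p (i x) = x))"

end

theory Submission
  imports Defs
begin

(*
  (i) For v\<^sub>1, ..., v\<^sub>n in N, the form g \<mapsto> det (g\<^sub>j (v\<^sub>l)) on n-tuples of elements
  of N\<^sup>* is alternating and multilinear, and its value at the coordinate functionals restricted
  to N is det (v\<^sub>1, ..., v\<^sub>n). As char is an ideal, it contains these generators of Fitt\<^sup>0.

  (ii) If N is projective, the dual basis lemma gives u\<^sub>k in N and \<phi>\<^sub>k in N\<^sup>* with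
  x = \<Sum>\<^sub>k \<phi>\<^sub>k(x) u\<^sub>k, so the restricted coordinate functionals are e\<^sub>j\<^sup>* = \<Sum>\<^sub>k (u\<^sub>k)\<^sub>j \<phi>\<^sub>k.
  Expanding an alternating form \<Phi> multilinearly, only injective index maps \<kappa> survive, and
  grouping them into orbits under permutations of the arguments writes \<Phi> e\<^sup>* as a combination
  of the minors det (u (\<kappa> 1), ..., u (\<kappa> n)) of the relations.
*)

interpretation rmod: module "(*) :: 'a::comm_ring_1 \<Rightarrow> 'a \<Rightarrow> 'a"
  by unfold_locales (simp_all add: algebra_simps)

lemma dual_sub_add:
  assumes "f \<in> dual_sub N" and "g \<in> dual_sub N"
  shows "(\<lambda>x. f x + g x) \<in> dual_sub N"
  using assms by (auto simp: dual_sub_def distrib_left)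

lemma dual_sub_cmult:
  assumes "f \<in> dual_sub N"
  shows "(\<lambda>x. c * f x) \<in> dual_sub N"
  using assms by (auto simp: dual_sub_def distrib_left mult.left_commute)

lemma dual_sub_sum:
  assumes "finite K" and "\<And>k. k \<in> K \<Longrightarrow> \<psi> k \<in> dual_sub N"
  shows "(\<lambda>x. \<Sum>k\<in>K. c k * \<psi> k x) \<in> dual_sub N"
  using assms
  by (induction K rule: finite_induct)
     (auto simp: dual_sub_def distrib_left sum.distrib mult.left_commute sum_distrib_left)

lemma alt_multilinear_add:
  assumes "alt_multilinear N \<Phi>" and "\<And>j. g j \<in> dual_sub N"
    and "h \<in> dual_sub N" and "h' \<in> dual_sub N"
  shows "\<Phi> (g(i := (\<lambda>x. h x + h' x))) = \<Phi> (g(i := h)) + \<Phi> (g(i := h'))"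
  using assms unfolding alt_multilinear_def by simp

lemma alt_multilinear_cmult:
  assumes "alt_multilinear N \<Phi>" and "\<And>j. g j \<in> dual_sub N" and "h \<in> dual_sub N"
  shows "\<Phi> (g(i := (\<lambda>x. c * h x))) = c * \<Phi> (g(i := h))"
  using assms unfolding alt_multilinear_def by simp

lemma alt_multilinear_eq_zero:
  assumes "alt_multilinear N \<Phi>" and "\<And>j. g j \<in> dual_sub N" and "i \<noteq> j" and "g i = g j"
  shows "\<Phi> g = 0"
  using assms unfolding alt_multilinear_def by blast

lemma alt_multilinearI:
  fixes \<Phi> :: "('n \<Rightarrow> 'a::comm_ring_1^'n \<Rightarrow> 'a) \<Rightarrow> 'a"
  assumes add: "\<And>g i h h'. (\<And>j. g j \<in> dual_sub N) \<Longrightarrow> h \<in> dual_sub N \<Longrightarrow> h' \<in> dual_sub N \<Longrightarrow>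
      \<Phi> (g(i := (\<lambda>x. h x + h' x))) = \<Phi> (g(i := h)) + \<Phi> (g(i := h'))"
    and cmult: "\<And>g i c h. (\<And>j. g j \<in> dual_sub N) \<Longrightarrow> h \<in> dual_sub N \<Longrightarrow>
      \<Phi> (g(i := (\<lambda>x. c * h x))) = c * \<Phi> (g(i := h))"
    and alt: "\<And>g i j. (\<And>j. g j \<in> dual_sub N) \<Longrightarrow> i \<noteq> j \<Longrightarrow> g i = g j \<Longrightarrow> \<Phi> g = 0"
  shows "alt_multilinear N \<Phi>"
  unfolding alt_multilinear_def
proof (intro allI impI conjI ballI)
  fix g :: "'n \<Rightarrow> 'a^'n \<Rightarrow> 'a" and i h h'
  assume "\<forall>j. g j \<in> dual_sub N" and "h \<in> dual_sub N" and "h' \<in> dual_sub N"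
  then show "\<Phi> (g(i := (\<lambda>x. h x + h' x))) = \<Phi> (g(i := h)) + \<Phi> (g(i := h'))"
    by (simp add: add)
next
  fix g :: "'n \<Rightarrow> 'a^'n \<Rightarrow> 'a" and i c h
  assume "\<forall>j. g j \<in> dual_sub N" and "h \<in> dual_sub N"
  then show "\<Phi> (g(i := (\<lambda>x. c * h x))) = c * \<Phi> (g(i := h))"
    by (simp add: cmult)
next
  fix g :: "'n \<Rightarrow> 'a^'n \<Rightarrow> 'a"
  assume "\<forall>j. g j \<in> dual_sub N" and "\<exists>i j. i \<noteq> j \<and> g i = g j"
  then show "\<Phi> g = 0"
    using alt by blast
qed

lemma alt_multilinear_zero: "alt_multilinear N (\<lambda>g. 0)"
  by (rule alt_multilinearI) simp_all

lemma alt_multilinear_plus: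
  assumes "alt_multilinear N \<Phi>" and "alt_multilinear N \<Psi>"
  shows "alt_multilinear N (\<lambda>g. \<Phi> g + \<Psi> g)"
  using alt_multilinear_add[OF assms(1)] alt_multilinear_add[OF assms(2)]
    alt_multilinear_cmult[OF assms(1)] alt_multilinear_cmult[OF assms(2)]
    alt_multilinear_eq_zero[OF assms(1)] alt_multilinear_eq_zero[OF assms(2)]
  by (intro alt_multilinearI) (simp_all add: distrib_left ac_simps)

lemma alt_multilinear_scaled:
  assumes "alt_multilinear N \<Phi>"
  shows "alt_multilinear N (\<lambda>g. c * \<Phi> g)"
  using alt_multilinear_add[OF assms] alt_multilinear_cmult[OF assms] alt_multilinear_eq_zero[OF assms]
  by (intro alt_multilinearI) (simp_all add: distrib_left mult.left_commute)

lemma alt_multilinear_sum: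
  assumes am: "alt_multilinear N \<Phi>" and g: "\<And>j. g j \<in> dual_sub N"
    and "finite K" and \<psi>: "\<And>k. k \<in> K \<Longrightarrow> \<psi> k \<in> dual_sub N"
  shows "\<Phi> (g(i := (\<lambda>x. \<Sum>k\<in>K. c k * \<psi> k x))) = (\<Sum>k\<in>K. c k * \<Phi> (g(i := \<psi> k)))"
  using \<open>finite K\<close> \<psi>
proof (induction K rule: finite_induct)
  case empty
  have "\<Phi> (g(i := (\<lambda>x. 0 * g i x))) = 0 * \<Phi> (g(i := g i))"
    by (rule alt_multilinear_cmult[OF am]) (rule g)+
  then show ?case by (simp only: sum.empty mult_zero_left)
next
  case (insert k K)
  have "\<Phi> (g(i := (\<lambda>x. \<Sum>k\<in>insert k K. c k * \<psi> k x)))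
      = \<Phi> (g(i := (\<lambda>x. c k * \<psi> k x + (\<Sum>k\<in>K. c k * \<psi> k x))))"
    using insert.hyps by simp
  also have "\<dots> = \<Phi> (g(i := (\<lambda>x. c k * \<psi> k x))) + \<Phi> (g(i := (\<lambda>x. \<Sum>k\<in>K. c k * \<psi> k x)))"
    by (rule alt_multilinear_add[OF am g dual_sub_cmult dual_sub_sum]) (simp_all add: insert)
  also have "\<Phi> (g(i := (\<lambda>x. c k * \<psi> k x))) = c k * \<Phi> (g(i := \<psi> k))"
    by (rule alt_multilinear_cmult[OF am g]) (simp add: insert)
  also have "\<Phi> (g(i := (\<lambda>x. \<Sum>k\<in>K. c k * \<psi> k x))) = (\<Sum>k\<in>K. c k * \<Phi> (g(i := \<psi> k)))"
    by (rule insert.IH) (simp add: insert.prems)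
  also have "c k * \<Phi> (g(i := \<psi> k)) + (\<Sum>k\<in>K. c k * \<Phi> (g(i := \<psi> k)))
      = (\<Sum>k\<in>insert k K. c k * \<Phi> (g(i := \<psi> k)))"
    using insert.hyps by simp
  finally show ?case .
qed

lemma sum_PiE_insert:
  assumes "j0 \<notin> S"
  shows "(\<Sum>\<kappa>\<in>Pi\<^sub>E (insert j0 S) B. F \<kappa>) = (\<Sum>k\<in>B j0. \<Sum>\<kappa>\<in>Pi\<^sub>E S B. F (\<kappa>(j0 := k)))"
proof -
  have "(\<Sum>\<kappa>\<in>Pi\<^sub>E (insert j0 S) B. F \<kappa>) = (\<Sum>(k, \<kappa>)\<in>B j0 \<times> Pi\<^sub>E S B. F (\<kappa>(j0 := k)))"
    unfolding PiE_insert_eq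
    by (subst sum.reindex[OF inj_combinator[OF assms]]) (simp add: case_prod_unfold)
  then show ?thesis
    by (simp add: sum.cartesian_product)
qed

(* Induction over the set S of expanded slots; the remaining slots hold arbitrary functionals h,
   so that the induction hypothesis still applies once one more slot is fixed. *)
lemma alt_multilinear_expand:
  assumes am: "alt_multilinear N \<Phi>" and "finite K" and \<psi>: "\<And>k. k \<in> K \<Longrightarrow> \<psi> k \<in> dual_sub N"
    and "finite S" and h: "\<And>j. h j \<in> dual_sub N"
  shows "\<Phi> (\<lambda>j. if j \<in> S then (\<lambda>x. \<Sum>k\<in>K. a j k * \<psi> k x) else h j) =
    (\<Sum>\<kappa>\<in>Pi\<^sub>E S (\<lambda>_. K). (\<Prod>j\<in>S. a j (\<kappa> j)) * \<Phi> (\<lambda>j. if j \<in> S then \<psi> (\<kappa> j) else h j))"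
  using \<open>finite S\<close> h
proof (induction S arbitrary: h rule: finite_induct)
  case empty
  then show ?case by simp
next
  case (insert j0 S)
  define G where "G = (\<lambda>j. if j \<in> S then (\<lambda>x. \<Sum>k\<in>K. a j k * \<psi> k x) else h j)"
  define F where "F \<kappa> = (\<Prod>j\<in>insert j0 S. a j (\<kappa> j)) *
    \<Phi> (\<lambda>j. if j \<in> insert j0 S then \<psi> (\<kappa> j) else h j)" for \<kappa>
  have G: "G j \<in> dual_sub N" for j
    using insert.prems \<open>finite K\<close> \<psi> by (simp add: G_def dual_sub_sum)
  have F_upd: "F (\<kappa>(j0 := k)) = a j0 k * ((\<Prod>j\<in>S. a j (\<kappa> j)) *
      \<Phi> (\<lambda>j. if j \<in> S then \<psi> (\<kappa> j) else (h(j0 := \<psi> k)) j))" for k \<kappa>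
  proof -
    have prod_S: "(\<Prod>j\<in>S. a j ((\<kappa>(j0 := k)) j)) = (\<Prod>j\<in>S. a j (\<kappa> j))"
      using insert.hyps by (intro prod.cong) auto
    have args: "(\<lambda>j. if j \<in> insert j0 S then \<psi> ((\<kappa>(j0 := k)) j) else h j)
        = (\<lambda>j. if j \<in> S then \<psi> (\<kappa> j) else (h(j0 := \<psi> k)) j)"
      using insert.hyps by (auto simp: fun_eq_iff)
    show ?thesis
      unfolding F_def prod.insert[OF insert.hyps] prod_S args by (simp only: fun_upd_same mult.assoc)
  qed
  have "\<Phi> (\<lambda>j. if j \<in> insert j0 S then (\<lambda>x. \<Sum>k\<in>K. a j k * \<psi> k x) else h j)
      = \<Phi> (G(j0 := (\<lambda>x. \<Sum>k\<in>K. a j0 k * \<psi> k x)))"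
    by (rule arg_cong[where f = \<Phi>]) (auto simp: G_def)
  also have "\<dots> = (\<Sum>k\<in>K. a j0 k * \<Phi> (G(j0 := \<psi> k)))"
    by (rule alt_multilinear_sum[OF am G \<open>finite K\<close> \<psi>])
  also have "\<dots> = (\<Sum>k\<in>K. \<Sum>\<kappa>\<in>Pi\<^sub>E S (\<lambda>_. K). F (\<kappa>(j0 := k)))"
  proof (rule sum.cong[OF refl])
    fix k assume "k \<in> K"
    then have "(h(j0 := \<psi> k)) j \<in> dual_sub N" for j
      using insert.prems \<psi> by simp
    moreover have "G(j0 := \<psi> k) = (\<lambda>j. if j \<in> S then (\<lambda>x. \<Sum>k\<in>K. a j k * \<psi> k x) else (h(j0 := \<psi> k)) j)"
      using insert.hyps by (auto simp: G_def)
    ultimately show "a j0 k * \<Phi> (G(j0 := \<psi> k)) = (\<Sum>\<kappa>\<in>Pi\<^sub>E S (\<lambda>_. K). F (\<kappa>(j0 := k)))"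
      using insert.IH by (simp add: F_upd sum_distrib_left)
  qed
  also have "\<dots> = (\<Sum>\<kappa>\<in>Pi\<^sub>E (insert j0 S) (\<lambda>_. K). F \<kappa>)"
    by (rule sum_PiE_insert[symmetric]) (rule insert.hyps)
  finally show ?case
    by (simp only: F_def)
qed

lemma alt_multilinear_swap:
  assumes am: "alt_multilinear N \<Phi>" and g: "\<And>j. g j \<in> dual_sub N" and "a \<noteq> b"
  shows "\<Phi> (g \<circ> Transposition.transpose a b) = - \<Phi> g"
proof -
  define s where "s = (\<lambda>x. g a x + g b x)"
  have s: "s \<in> dual_sub N"
    unfolding s_def by (rule dual_sub_add[OF g g])
  have split: "\<Phi> (G(c := s)) = \<Phi> (G(c := g a)) + \<Phi> (G(c := g b))"
    if "\<And>j. G j \<in> dual_sub N" for G c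
    unfolding s_def by (rule alt_multilinear_add[OF am that g g])
  have upd: "(g(c := f)) j \<in> dual_sub N" if "f \<in> dual_sub N" for c f j
    using g that by simp
  (* expand the vanishing value with s = g a + g b in both slots a and b *)
  have "0 = \<Phi> (g(b := s, a := s))"
    by (rule alt_multilinear_eq_zero[OF am, where i = a and j = b, symmetric])
      (use \<open>a \<noteq> b\<close> g s in simp_all)
  also have "\<dots> = \<Phi> (g(b := s)) + \<Phi> (g(a := g b, b := s))"
  proof -
    have "g(b := s, a := g a) = g(b := s)" and "g(b := s, a := g b) = g(a := g b, b := s)"
      using \<open>a \<noteq> b\<close> by (auto simp: fun_eq_iff)
    then show ?thesis
      using split[of "g(b := s)" a] upd s by simp
  qed
  also have "\<Phi> (g(b := s)) = \<Phi> g"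
  proof -
    have "\<Phi> (g(b := g a)) = 0"
      by (rule alt_multilinear_eq_zero[OF am, where i = a and j = b]) (use \<open>a \<noteq> b\<close> g in simp_all)
    then show ?thesis
      using split[of g b] g by simp
  qed
  also have "\<Phi> (g(a := g b, b := s)) = \<Phi> (g \<circ> Transposition.transpose a b)"
  proof -
    have "\<Phi> (g(a := g b, b := g b)) = 0"
      by (rule alt_multilinear_eq_zero[OF am, where i = a and j = b]) (use \<open>a \<noteq> b\<close> g in simp_all)
    moreover have "g(a := g b, b := g a) = g \<circ> Transposition.transpose a b"
      using \<open>a \<noteq> b\<close> by (auto simp: fun_eq_iff Transposition.transpose_def)
    ultimately show ?thesis
      using split[of "g(a := g b)" b] upd g by simp
  qed
  finally show ?thesis
    by (simp add: eq_neg_iff_add_eq_0 add.commute)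
qed

lemma alt_multilinear_permute:
  assumes am: "alt_multilinear N \<Phi>" and p: "p permutes (UNIV :: 'n::finite set)"
    and g: "\<And>j. g j \<in> dual_sub N"
  shows "\<Phi> (g \<circ> p) = of_int (sign p) * \<Phi> g"
  using p finite_class.finite_UNIV g
proof (induction p arbitrary: g rule: permutes_induct)
  case id
  then show ?case by simp
next
  case (swap a b p)
  have "\<Phi> (g \<circ> (Transposition.transpose a b \<circ> p)) = \<Phi> ((g \<circ> Transposition.transpose a b) \<circ> p)"
    by (simp add: o_assoc)
  also have "\<dots> = of_int (sign p) * \<Phi> (g \<circ> Transposition.transpose a b)"
    using swap.prems by (intro swap.IH) simp
  also have "\<Phi> (g \<circ> Transposition.transpose a b) = - \<Phi> g"
    by (rule alt_multilinear_swap[OF am swap.prems \<open>a \<noteq> b\<close>])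
  also have "sign p = - sign (Transposition.transpose a b \<circ> p)"
    using \<open>a \<noteq> b\<close> \<open>p permutes UNIV\<close>
    by (simp add: sign_compose permutation_swap_id permutes_imp_permutation sign_swap_id)
  finally show ?case
    by (simp add: comp_def)
qed

lemma inj_range_eq_permutes_orbit:
  fixes \<kappa>0 :: "'n::finite \<Rightarrow> 'b"
  assumes "inj \<kappa>0"
  shows "{\<kappa> :: 'n \<Rightarrow> 'b. inj \<kappa> \<and> range \<kappa> = range \<kappa>0}
    = (\<lambda>\<sigma>. \<kappa>0 \<circ> \<sigma>) ` {\<sigma>. \<sigma> permutes UNIV}"
proof (intro equalityI subsetI)
  fix \<kappa> :: "'n \<Rightarrow> 'b" assume "\<kappa> \<in> {\<kappa>. inj \<kappa> \<and> range \<kappa> = range \<kappa>0}"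
  then have "inj \<kappa>" and range: "range \<kappa> = range \<kappa>0"
    by auto
  define \<sigma> where "\<sigma> = inv \<kappa>0 \<circ> \<kappa>"
  have "\<kappa> j \<in> range \<kappa>0" for j
    using range by blast
  then have \<kappa>: "\<kappa>0 \<circ> \<sigma> = \<kappa>"
    by (simp add: \<sigma>_def fun_eq_iff f_inv_into_f)
  then have "inj \<sigma>"
    using \<open>inj \<kappa>\<close> by (metis inj_on_imageI2)
  then have "\<sigma> permutes UNIV"
    by (intro bij_imp_permutes) (simp_all add: bij_def finite_UNIV_inj_surj)
  with \<kappa> show "\<kappa> \<in> (\<lambda>\<sigma>. \<kappa>0 \<circ> \<sigma>) ` {\<sigma>. \<sigma> permutes UNIV}"
    by blast
next
  fix \<kappa> :: "'n \<Rightarrow> 'b" assume "\<kappa> \<in> (\<lambda>\<sigma>. \<kappa>0 \<circ> \<sigma>) ` {\<sigma>. \<sigma> permutes UNIV}"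
  then obtain \<sigma> where "\<sigma> permutes UNIV" and "\<kappa> = \<kappa>0 \<circ> \<sigma>"
    by auto
  moreover have "inj (\<kappa>0 \<circ> \<sigma>)"
    using assms \<open>\<sigma> permutes UNIV\<close> by (simp add: inj_compose permutes_inj)
  moreover have "range (\<kappa>0 \<circ> \<sigma>) = range \<kappa>0"
    using \<open>\<sigma> permutes UNIV\<close> by (metis image_comp permutes_image)
  ultimately show "\<kappa> \<in> {\<kappa>. inj \<kappa> \<and> range \<kappa> = range \<kappa>0}"
    by blast
qed

lemma alt_multilinear_orbit_sum:
  fixes a :: "'n::finite \<Rightarrow> 'k \<Rightarrow> 'a::comm_ring_1"
  assumes am: "alt_multilinear N \<Phi>" and \<psi>: "\<And>k. \<psi> k \<in> dual_sub N" and "inj \<kappa>0"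
  shows "(\<Sum>\<kappa> | inj \<kappa> \<and> range \<kappa> = range \<kappa>0. (\<Prod>j\<in>UNIV. a j (\<kappa> j)) * \<Phi> (\<psi> \<circ> \<kappa>))
    = det (\<chi> j l. a j (\<kappa>0 l)) * \<Phi> (\<psi> \<circ> \<kappa>0)"
proof -
  have "inj_on (\<lambda>\<sigma>. \<kappa>0 \<circ> \<sigma>) {\<sigma>. \<sigma> permutes UNIV}"
    using \<open>inj \<kappa>0\<close> by (auto intro!: inj_onI simp: fun_eq_iff inj_eq)
  then have "(\<Sum>\<kappa> | inj \<kappa> \<and> range \<kappa> = range \<kappa>0. (\<Prod>j\<in>UNIV. a j (\<kappa> j)) * \<Phi> (\<psi> \<circ> \<kappa>))
      = (\<Sum>\<sigma> | \<sigma> permutes UNIV. (\<Prod>j\<in>UNIV. a j (\<kappa>0 (\<sigma> j))) * \<Phi> ((\<psi> \<circ> \<kappa>0) \<circ> \<sigma>))"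
    unfolding inj_range_eq_permutes_orbit[OF \<open>inj \<kappa>0\<close>]
    by (subst sum.reindex) (simp_all add: o_assoc)
  also have "\<dots> = (\<Sum>\<sigma> | \<sigma> permutes UNIV. of_int (sign \<sigma>) * (\<Prod>j\<in>UNIV. a j (\<kappa>0 (\<sigma> j)))) * \<Phi> (\<psi> \<circ> \<kappa>0)"
    unfolding sum_distrib_right
    by (intro sum.cong refl) (simp add: alt_multilinear_permute[OF am] \<psi>)
  also have "\<dots> = det (\<chi> j l. a j (\<kappa>0 l)) * \<Phi> (\<psi> \<circ> \<kappa>0)"
    by (simp add: det_def)
  finally show ?thesis .
qed

lemma alt_multilinear_expand_injective:
  fixes a :: "'n::finite \<Rightarrow> 'k \<Rightarrow> 'a::comm_ring_1"
  assumes am: "alt_multilinear N \<Phi>" and "finite K" and \<psi>: "\<And>k. \<psi> k \<in> dual_sub N"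
  shows "\<Phi> (\<lambda>j x. \<Sum>k\<in>K. a j k * \<psi> k x)
    = (\<Sum>\<kappa> | range \<kappa> \<subseteq> K \<and> inj \<kappa>. (\<Prod>j\<in>UNIV. a j (\<kappa> j)) * \<Phi> (\<psi> \<circ> \<kappa>))"
proof -
  define T where "T \<kappa> = (\<Prod>j\<in>UNIV. a j (\<kappa> j)) * \<Phi> (\<psi> \<circ> \<kappa>)" for \<kappa> :: "'n \<Rightarrow> 'k"
  define P where "P = Pi\<^sub>E (UNIV :: 'n set) (\<lambda>_. K)"
  have "finite P"
    unfolding P_def using \<open>finite K\<close> by (simp add: finite_PiE)
  have zero: "(\<lambda>x. 0) \<in> dual_sub N"
    by (simp add: dual_sub_def)
  have "\<Phi> (\<lambda>j. if j \<in> UNIV then (\<lambda>x. \<Sum>k\<in>K. a j k * \<psi> k x) else (\<lambda>x. 0))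
      = (\<Sum>\<kappa>\<in>P. (\<Prod>j\<in>UNIV. a j (\<kappa> j)) * \<Phi> (\<lambda>j. if j \<in> UNIV then \<psi> (\<kappa> j) else (\<lambda>x. 0)))"
    unfolding P_def by (rule alt_multilinear_expand[OF am \<open>finite K\<close>]) (simp_all add: \<psi> zero)
  then have "\<Phi> (\<lambda>j x. \<Sum>k\<in>K. a j k * \<psi> k x) = (\<Sum>\<kappa>\<in>P. T \<kappa>)"
    by (simp add: T_def comp_def)
  also have "\<dots> = (\<Sum>\<kappa> | range \<kappa> \<subseteq> K \<and> inj \<kappa>. T \<kappa>)"
  proof (rule sum.mono_neutral_right[OF \<open>finite P\<close>])
    show "{\<kappa>. range \<kappa> \<subseteq> K \<and> inj \<kappa>} \<subseteq> P"
      by (auto simp: P_def)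
    show "\<forall>\<kappa>\<in>P - {\<kappa>. range \<kappa> \<subseteq> K \<and> inj \<kappa>}. T \<kappa> = 0"
    proof
      fix \<kappa> assume "\<kappa> \<in> P - {\<kappa>. range \<kappa> \<subseteq> K \<and> inj \<kappa>}"
      then obtain i j where "i \<noteq> j" and "\<kappa> i = \<kappa> j"
        by (auto simp: P_def inj_def)
      then have "\<Phi> (\<psi> \<circ> \<kappa>) = 0"
        by (intro alt_multilinear_eq_zero[OF am, where i = i and j = j]) (simp_all add: \<psi>)
      then show "T \<kappa> = 0"
        by (simp add: T_def)
    qed
  qed
  finally show ?thesis
    by (simp only: T_def)
qed

lemma alt_multilinear_in_span_minors:
  fixes a :: "'n::finite \<Rightarrow> 'k \<Rightarrow> 'a::comm_ring_1"
  assumes am: "alt_multilinear N \<Phi>" and "finite K" and \<psi>: "\<And>k. \<psi> k \<in> dual_sub N"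
  shows "\<Phi> (\<lambda>j x. \<Sum>k\<in>K. a j k * \<psi> k x) \<in> rmod.span {det (\<chi> j l. a j (\<kappa> l)) | \<kappa>. range \<kappa> \<subseteq> K}"
proof -
  define T where "T \<kappa> = (\<Prod>j\<in>UNIV. a j (\<kappa> j)) * \<Phi> (\<psi> \<circ> \<kappa>)" for \<kappa> :: "'n \<Rightarrow> 'k"
  define Q where "Q = {\<kappa> :: 'n \<Rightarrow> 'k. range \<kappa> \<subseteq> K \<and> inj \<kappa>}"
  have "finite Q"
    by (rule finite_subset[of _ "Pi\<^sub>E UNIV (\<lambda>_. K)"]) (auto simp: Q_def finite_PiE \<open>finite K\<close>)
  have "\<Phi> (\<lambda>j x. \<Sum>k\<in>K. a j k * \<psi> k x) = (\<Sum>\<kappa>\<in>Q. T \<kappa>)"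
    unfolding Q_def T_def by (rule alt_multilinear_expand_injective[OF am \<open>finite K\<close> \<psi>])
  also have "\<dots> = (\<Sum>y\<in>Pow K. \<Sum>\<kappa>\<in>{\<kappa> \<in> Q. range \<kappa> = y}. T \<kappa>)"
    using \<open>finite Q\<close> \<open>finite K\<close> by (intro sum.group[symmetric]) (auto simp: Q_def)
  also have "\<dots> \<in> rmod.span {det (\<chi> j l. a j (\<kappa> l)) | \<kappa>. range \<kappa> \<subseteq> K}"
  proof (rule rmod.span_sum)
    fix y assume "y \<in> Pow K"
    show "(\<Sum>\<kappa>\<in>{\<kappa> \<in> Q. range \<kappa> = y}. T \<kappa>) \<in> rmod.span {det (\<chi> j l. a j (\<kappa> l)) | \<kappa>. range \<kappa> \<subseteq> K}"
    proof (cases "{\<kappa> \<in> Q. range \<kappa> = y} = {}")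
      case True
      then show ?thesis
        by (simp only: sum.empty rmod.span_zero)
    next
      case False
      then obtain \<kappa>0 where "\<kappa>0 \<in> Q" and y: "range \<kappa>0 = y"
        by blast
      then have "inj \<kappa>0" and "range \<kappa>0 \<subseteq> K"
        by (auto simp: Q_def)
      have "{\<kappa> \<in> Q. range \<kappa> = y} = {\<kappa>. inj \<kappa> \<and> range \<kappa> = range \<kappa>0}"
        using \<open>range \<kappa>0 \<subseteq> K\<close> by (auto simp: Q_def y)
      then have "(\<Sum>\<kappa>\<in>{\<kappa> \<in> Q. range \<kappa> = y}. T \<kappa>) = det (\<chi> j l. a j (\<kappa>0 l)) * \<Phi> (\<psi> \<circ> \<kappa>0)"
        unfolding T_def by (simp only:) (rule alt_multilinear_orbit_sum[OF am _ \<open>inj \<kappa>0\<close>], rule \<psi>)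
      moreover have "det (\<chi> j l. a j (\<kappa>0 l)) \<in> rmod.span {det (\<chi> j l. a j (\<kappa> l)) | \<kappa>. range \<kappa> \<subseteq> K}"
        using \<open>range \<kappa>0 \<subseteq> K\<close> by (intro rmod.span_base) blast
      ultimately show ?thesis
        by (simp add: rmod.span_scale mult.commute[of "det _"])
    qed
  qed
  finally show ?thesis .
qed

lemma char_idealI:
  "alt_multilinear N \<Phi> \<Longrightarrow> \<Phi> (\<lambda>i x. if x \<in> N then x $ i else 0) \<in> char_ideal N"
  unfolding char_ideal_def by blast

lemma char_idealE:
  assumes "z \<in> char_ideal N"
  obtains \<Phi> where "alt_multilinear N \<Phi>" and "z = \<Phi> (\<lambda>i x. if x \<in> N then x $ i else 0)"
  using assms unfolding char_ideal_def by blast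

lemma char_ideal_subspace: "rmod.subspace (char_ideal N)"
  unfolding rmod.subspace_def
proof (intro conjI ballI allI)
  show "0 \<in> char_ideal N"
    using char_idealI[OF alt_multilinear_zero[of N]] by simp
next
  let ?e = "\<lambda>i x. if x \<in> N then x $ i else 0"
  fix x y assume "x \<in> char_ideal N" and "y \<in> char_ideal N"
  obtain \<Phi> where "alt_multilinear N \<Phi>" and "x = \<Phi> ?e"
    using \<open>x \<in> char_ideal N\<close> by (rule char_idealE)
  moreover obtain \<Psi> where "alt_multilinear N \<Psi>" and "y = \<Psi> ?e"
    using \<open>y \<in> char_ideal N\<close> by (rule char_idealE)
  ultimately show "x + y \<in> char_ideal N"
    using char_idealI[OF alt_multilinear_plus[of N \<Phi> \<Psi>]] by simp
next
  let ?e = "\<lambda>i x. if x \<in> N then x $ i else 0"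
  fix c x assume "x \<in> char_ideal N"
  then obtain \<Phi> where "alt_multilinear N \<Phi>" and "x = \<Phi> ?e"
    by (rule char_idealE)
  then show "c * x \<in> char_ideal N"
    using char_idealI[OF alt_multilinear_scaled[of N \<Phi> c]] by simp
qed

lemma alt_multilinear_det_eval:
  fixes v :: "'n::finite \<Rightarrow> 'a::comm_ring_1^'n"
  shows "alt_multilinear N (\<lambda>g. det (\<chi> j l. g j (v l)))"
proof -
  have row: "(\<chi> j l. (g(i := f)) j (v l)) = (\<chi> j. if j = i then (\<chi> l. f (v l)) else (\<chi> l. g j (v l)))"
    for g :: "'n \<Rightarrow> 'a^'n \<Rightarrow> 'a" and i f
    by (simp add: vec_eq_iff)
  have add: "(\<chi> l. h (v l) + h' (v l)) = (\<chi> l. h (v l)) + (\<chi> l. h' (v l))" for h h' :: "'a^'n \<Rightarrow> 'a"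
    by (simp add: vec_eq_iff)
  have scale: "(\<chi> l. c * h (v l)) = c *s (\<chi> l. h (v l))" for c and h :: "'a^'n \<Rightarrow> 'a"
    by (simp add: vec_eq_iff)
  show ?thesis
  proof (rule alt_multilinearI)
    fix g :: "'n \<Rightarrow> 'a^'n \<Rightarrow> 'a" and i h h'
    show "det (\<chi> j l. (g(i := \<lambda>x. h x + h' x)) j (v l))
        = det (\<chi> j l. (g(i := h)) j (v l)) + det (\<chi> j l. (g(i := h')) j (v l))"
      unfolding row add by (rule det_row_add)
  next
    fix g :: "'n \<Rightarrow> 'a^'n \<Rightarrow> 'a" and i c h
    show "det (\<chi> j l. (g(i := \<lambda>x. c * h x)) j (v l)) = c * det (\<chi> j l. (g(i := h)) j (v l))"
      unfolding row scale by (rule det_row_mul)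
  next
    fix g :: "'n \<Rightarrow> 'a^'n \<Rightarrow> 'a" and i j
    assume "i \<noteq> j" and "g i = g j"
    then show "det (\<chi> j l. g j (v l)) = 0"
      by (intro det_identical_rows[of i j]) (auto simp: row_def vec_eq_iff)
  qed
qed

lemma fitt0_subset_char_ideal:
  fixes N :: "('a::comm_ring_1^'n) set"
  shows "fitt0 N \<subseteq> char_ideal N"
  unfolding fitt0_def
proof (rule rmod.span_minimal[OF _ char_ideal_subspace], safe)
  fix v :: "'n \<Rightarrow> 'a^'n"
  assume "\<forall>i. v i \<in> N"
  then have "(\<chi> j l. (\<lambda>i x. if x \<in> N then x $ i else 0) j (v l)) = transpose (\<chi> i. v i)"
    by (simp add: vec_eq_iff transpose_def)
  then have "det (\<chi> i. v i) = (\<lambda>g. det (\<chi> j l. g j (v l))) (\<lambda>i x. if x \<in> N then x $ i else 0)"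
    by simp
  then show "det (\<chi> i. v i) \<in> char_ideal N"
    using char_idealI[OF alt_multilinear_det_eval[of N v]] by simp
qed

lemma fg_projective_closed:
  fixes N :: "('a::comm_ring_1^'n) set"
  assumes "fg_projective N" and "x \<in> N" and "y \<in> N"
  shows "x + y \<in> N" and "c *s x \<in> N"
proof -
  obtain m :: nat and i :: "'a^'n \<Rightarrow> nat \<Rightarrow> 'a" and p :: "(nat \<Rightarrow> 'a) \<Rightarrow> 'a^'n" where
    i_supp: "\<forall>x\<in>N. \<forall>k\<ge>m. i x k = 0" and
    p_add: "\<forall>u v. p (\<lambda>k. u k + v k) = p u + p v" and
    p_scale: "\<forall>c u. p (\<lambda>k. c * u k) = c *s p u" and
    p_N: "\<forall>u. (\<forall>k\<ge>m. u k = 0) \<longrightarrow> p u \<in> N" and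
    p_i: "\<forall>x\<in>N. p (i x) = x"
    using assms(1) unfolding fg_projective_def by blast
  have "x + y = p (\<lambda>k. i x k + i y k)"
    using p_add p_i assms by simp
  then show "x + y \<in> N"
    using p_N i_supp assms by simp
  have "c *s x = p (\<lambda>k. c * i x k)"
    using p_scale p_i assms by simp
  then show "c *s x \<in> N"
    using p_N i_supp assms by simp
qed

lemma fg_projective_dual_basis:
  fixes N :: "('a::comm_ring_1^'n) set"
  assumes "fg_projective N"
  obtains m and u :: "nat \<Rightarrow> 'a^'n" and \<phi> :: "nat \<Rightarrow> 'a^'n \<Rightarrow> 'a"
  where "\<And>k. k < m \<Longrightarrow> u k \<in> N" and "\<And>k. \<phi> k \<in> dual_sub N"
    and "\<And>x. x \<in> N \<Longrightarrow> x = (\<Sum>k<m. \<phi> k x *s u k)"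
proof -
  obtain m :: nat and i :: "'a^'n \<Rightarrow> nat \<Rightarrow> 'a" and p :: "(nat \<Rightarrow> 'a) \<Rightarrow> 'a^'n" where
    i_add: "\<forall>x\<in>N. \<forall>y\<in>N. i (x + y) = (\<lambda>k. i x k + i y k)" and
    i_scale: "\<forall>c. \<forall>x\<in>N. i (c *s x) = (\<lambda>k. c * i x k)" and
    i_supp: "\<forall>x\<in>N. \<forall>k\<ge>m. i x k = 0" and
    p_add: "\<forall>u v. p (\<lambda>k. u k + v k) = p u + p v" and
    p_scale: "\<forall>c u. p (\<lambda>k. c * u k) = c *s p u" and
    p_N: "\<forall>u. (\<forall>k\<ge>m. u k = 0) \<longrightarrow> p u \<in> N" and
    p_i: "\<forall>x\<in>N. p (i x) = x"
    using assms unfolding fg_projective_def by blast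
  define \<delta> where "\<delta> k = (\<lambda>l. if l = k then 1 else 0 :: 'a)" for k :: nat
  define u where "u k = p (\<delta> k)" for k
  define \<phi> where "\<phi> k x = (if x \<in> N then i x k else 0)" for k x
  have p_sum: "p (\<lambda>l. \<Sum>k\<in>K. c k * \<delta> k l) = (\<Sum>k\<in>K. c k *s u k)" if "finite K" for K c
    using that
  proof (induction K rule: finite_induct)
    case empty
    then show ?case
      using p_scale[rule_format, of 0 "\<lambda>l. 0"] by simp
  next
    case (insert k K)
    then show ?case
      using p_add[rule_format, of "\<lambda>l. c k * \<delta> k l" "\<lambda>l. \<Sum>k\<in>K. c k * \<delta> k l"]
        p_scale[rule_format, of "c k" "\<delta> k"]
      by (simp add: u_def)
  qed
  have rep: "x = (\<Sum>k<m. \<phi> k x *s u k)" if "x \<in> N" for x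
  proof -
    have "i x k * \<delta> k l = (if l = k then i x k else 0)" for k l
      by (simp add: \<delta>_def)
    then have "(\<Sum>k<m. i x k * \<delta> k l) = (if l < m then i x l else 0)" for l
      by (simp add: sum.delta')
    then have "i x = (\<lambda>l. \<Sum>k<m. i x k * \<delta> k l)"
      using i_supp that by (auto simp: fun_eq_iff not_less)
    then have "x = p (\<lambda>l. \<Sum>k<m. i x k * \<delta> k l)"
      using p_i that by metis
    then show ?thesis
      using that by (simp add: p_sum \<phi>_def)
  qed
  show thesis
  proof (rule that[of m u \<phi>])
    show "u k \<in> N" if "k < m" for k
      using p_N that by (simp add: u_def \<delta>_def)
    show "\<phi> k \<in> dual_sub N" for k
      using i_add i_scale fg_projective_closed[OF assms] by (simp add: dual_sub_def \<phi>_def)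
  qed (rule rep)
qed

lemma coordinates_eq_dual_basis_sum:
  assumes \<phi>: "\<And>k. \<phi> k \<in> dual_sub N" and rep: "\<And>x. x \<in> N \<Longrightarrow> x = (\<Sum>k<m. \<phi> k x *s u k)"
  shows "(\<lambda>j x. if x \<in> N then x $ j else 0) = (\<lambda>j x. \<Sum>k<m. u k $ j * \<phi> k x)"
proof (intro ext)
  fix j x
  show "(if x \<in> N then x $ j else 0) = (\<Sum>k<m. u k $ j * \<phi> k x)"
  proof (cases "x \<in> N")
    case True
    then have "x $ j = (\<Sum>k<m. \<phi> k x *s u k) $ j"
      using rep by metis
    then show ?thesis
      using True by (simp add: mult.commute)
  next
    case False
    then show ?thesis
      using \<phi> by (simp add: dual_sub_def)
  qed
qed

lemma char_ideal_subset_fitt0: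
  fixes N :: "('a::comm_ring_1^'n) set"
  assumes "fg_projective N"
  shows "char_ideal N \<subseteq> fitt0 N"
proof
  fix z assume "z \<in> char_ideal N"
  then obtain \<Phi> where am: "alt_multilinear N \<Phi>" and z: "z = \<Phi> (\<lambda>j x. if x \<in> N then x $ j else 0)"
    by (rule char_idealE)
  obtain m and u :: "nat \<Rightarrow> 'a^'n" and \<phi> :: "nat \<Rightarrow> 'a^'n \<Rightarrow> 'a" where u: "\<And>k. k < m \<Longrightarrow> u k \<in> N" and \<phi>: "\<And>k. \<phi> k \<in> dual_sub N"
    and rep: "\<And>x. x \<in> N \<Longrightarrow> x = (\<Sum>k<m. \<phi> k x *s u k)"
    using fg_projective_dual_basis[OF assms] by blast
  have "(\<lambda>j x. if x \<in> N then x $ j else 0) = (\<lambda>j x. \<Sum>k<m. u k $ j * \<phi> k x)"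
    using \<phi> rep by (rule coordinates_eq_dual_basis_sum)
  then have "z \<in> rmod.span {det (\<chi> j l. u (\<kappa> l) $ j) | \<kappa>. range \<kappa> \<subseteq> {..<m}}"
    unfolding z using alt_multilinear_in_span_minors[OF am finite_lessThan \<phi>] by simp
  also have "\<dots> \<subseteq> fitt0 N"
    unfolding fitt0_def
  proof (rule rmod.span_mono, safe)
    fix \<kappa> :: "'n \<Rightarrow> nat"
    assume "range \<kappa> \<subseteq> {..<m}"
    then have "\<forall>l. u (\<kappa> l) \<in> N"
      using u by blast
    moreover have "det (\<chi> j l. u (\<kappa> l) $ j) = det (\<chi> l. u (\<kappa> l))"
      using det_transpose[of "\<chi> l. u (\<kappa> l)"] by (simp add: transpose_def)
    ultimately show "\<exists>v. det (\<chi> j l. u (\<kappa> l) $ j) = det (\<chi> i. v i) \<and> (\<forall>i. v i \<in> N)"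
      by blast
  qed
  finally show "z \<in> fitt0 N" .
qed

theorem propositionC7:
  fixes scale :: "'a::comm_ring_1 \<Rightarrow> 'm::ab_group_add \<Rightarrow> 'm"
    and \<pi> :: "'a ^ 'n \<Rightarrow> 'm"
  assumes noeth: "noetherian_ring TYPE('a)"
    and M_module: "module scale"
    and M_fg: "\<exists>S. finite S \<and> module.span scale S = UNIV"
    and pres_hom: "module_hom (*s) scale \<pi>"
    and pres_surj: "surj \<pi>"
  shows "fitt0 {x. \<pi> x = 0} \<subseteq> char_ideal {x. \<pi> x = 0}
         \<and> (fg_projective {x. \<pi> x = 0} \<longrightarrow> fitt0 {x. \<pi> x = 0} = char_ideal {x. \<pi> x = 0})"
  by (simp add: subset_antisym fitt0_subset_char_ideal char_ideal_subset_fitt0)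

end
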